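(* We have $\psi_{FV}=\psi_{YZL}\circ\Psi$ as maps from $\mathfrak{S}_{n+1}$ to $\mathcal{LH}_n$.
   Context: A 2-Motzkin path of length $n$ is a word $\mathbf{s}=s_1\ldots s_n$ on the alphabet $\{\textsc{U},\textsc{D},\textsc{L}_r,\textsc{L}_b\}$ with as many letters $\textsc{U}$ as $\textsc{D}$ and heights $h_i(\mathbf{s})=|s_1\ldots s_i|_{\textsc{U}}-|s_1\ldots s_i|_{\textsc{D}}\ge 0$ for $i=1,\ldots,n$, $h_0(\mathbf{s})=0$. A Laguerre history of length $n$ is a pair $(\mathbf{s},\mathbf{p})$ with $\mathbf{s}$ a 2-Motzkin path of length $n$ and $\mathbf{p}=(p_1,\ldots,p_n)$ with $0\le p_i\le h_{i-1}(\mathbf{s})$; $\mathcal{LH}_n$ denotes the set of Laguerre histories of length $n$. Fran\c con–Viennot bijection $\psi_{FV}:\mathfrak{S}_{n+1}\to\mathcal{LH}_n$: for $\sigma\in\mathfrak{S}_{n+1}$ with convention $\sigma(0)=\sigma(n+2)=0$, a value $\sigma(j)$ is a peak if $\sigma(j-1)<\sigma(j)>\sigma(j+1)$, a valley if $\sigma(j-1)>\sigma(j)<\sigma(j+1)$, a double ascent if $\sigma(j-1)<\sigma(j)<\sigma(j+1)$, a double descent if $\sigma(j-1)>\sigma(j)>\sigma(j+1)$. Then $\psi_{FV}(\sigma)=(\mathbf{s},\mathbf{p})$ with, for $i=1,\ldots,n$, $s_i=\textsc{U}$ if $i$ is a valley, $\textsc{D}$ if $i$ is a peak, $\textsc{L}_b$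 if $i$ is a double ascent, $\textsc{L}_r$ if $i$ is a double descent of $\sigma$, and $p_i=(2\text{-}13)_i\sigma$, where $(2\text{-}13)_i\sigma=\#\{j: i<j<n+1,\ \sigma(j)<\sigma(i)<\sigma(j+1)\}$ (the number of occurrences of the vincular pattern $2\text{-}13$ in which the letter $i$ plays the role of the "2"). Yan–Zhou–Lin bijection $\psi_{YZL}:\mathfrak{S}_{n+1}\to\mathcal{LH}_n$: for $\sigma\in\mathfrak{S}_{n+1}$, $\psi_{YZL}(\sigma)=(\mathbf{s},\mathbf{p})$ where for $i=1,\ldots,n$: $s_i=\textsc{U}$ if $i<\sigma(i)$ and $i+1\le\sigma^{-1}(i+1)$; $s_i=\textsc{D}$ if $i\ge\sigma(i)$ and $i+1>\sigma^{-1}(i+1)$; $s_i=\textsc{L}_b$ if $i<\sigma(i)$ and $i+1>\sigma^{-1}(i+1)$; $s_i=\textsc{L}_r$ if $i\ge\sigma(i)$ and $i+1\le\sigma^{-1}(i+1)$; and $p_i=\mathsf{nest}_i\sigma=\#\{j: j<i<\sigma(i)<\sigma(j)\ \text{or}\ \sigma(j)<\sigma(i)\le i<j\}$. The bijection $\Phi$ on $\mathfrak{S}_m$ (Clarke–Steingr\'imsson–Zeng): for $\sigma\in\mathfrak{S}_m$, a letter $\sigma(i)$ is a descent top (resp. descent bottom) if $\sigma(i)>\sigma(i+1)$ (resp. $\sigma(i-1)>\sigma(i)$). For a letter $x=\sigma(i)$ let $(2\text{-}31)_x\sigma=\#\{j: i<j<m,\ \sigma(j+1)<x<\sigma(j)\}$.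 Form two biwords $\binom{f}{f'}$ and $\binom{g}{g'}$, where $f$ (resp. $g$) is the increasing word of descent bottoms (resp. non-descent bottoms) of $\sigma$, and $f'$ (resp. $g'$) is the arrangement of the descent tops (resp. non-descent tops) of $\sigma$ such that the number of inversions in $f'$ having $x$ as bottom (resp. the number of inversions in $g'$ having $x$ as top) equals $(2\text{-}31)_x\sigma$ for each letter $x$. Concatenate to obtain the biword $\binom{f\,g}{f'\,g'}$, rearrange its columns so that the bottom row is increasing; the top row is $\Phi(\sigma)$. The bijection $\Psi$ on $\mathfrak{S}_{n+1}$: given $\sigma\in\mathfrak{S}_{n+1}$, let $\hat\sigma\in\mathfrak{S}_{n+2}$ be $\hat\sigma=(\sigma(1)+1)(\sigma(2)+1)\cdots(\sigma(n+1)+1)\,1$ and $\tau=\Phi(\hat\sigma)$ (which satisfies $\tau(1)=n+2$); then $\Psi(\sigma)=\tau(2)\cdots\tau(n+2)\in\mathfrak{S}_{n+1}$. *)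

theory Defs
  imports "HOL-Combinatorics.Permutations"
begin

text \<open>Permutations of {1..m} are functions nat => nat that permute {1..m}
  (identity outside). Letters of 2-Motzkin paths: U, D, Lr, Lb.\<close>

datatype step = U | D | Lr | Lb

text \<open>Laguerre histories of length n are represented as a pair of lists
  (s_1 ... s_n, p_1 ... p_n).\<close>

definition ext0 :: "nat \<Rightarrow> (nat \<Rightarrow> nat) \<Rightarrow> nat \<Rightarrow> nat" where
  "ext0 m \<sigma> j = (if 1 \<le> j \<and> j \<le> m then \<sigma> j else 0)"

section \<open>Francon--Viennot\<close>

text \<open>Type (valley/peak/double ascent/double descent) of the value i of
  sigma in S_(n+1), located at position inv sigma i.\<close>
definition fv_step :: "nat \<Rightarrow> (nat \<Rightarrow> nat) \<Rightarrow> nat \<Rightarrow> step" where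
  "fv_step n \<sigma> i =
     (let k = inv \<sigma> i;
          a = ext0 (Suc n) \<sigma> (k - 1);
          b = ext0 (Suc n) \<sigma> (k + 1)
      in if a > i \<and> i < b then U
         else if a < i \<and> i > b then D
         else if a < i \<and> i < b then Lb
         else Lr)"

text \<open>(2-13)_i sigma: occurrences of the vincular pattern 2-13 where the
  letter i plays the role of the 2.\<close>
definition pat213 :: "nat \<Rightarrow> (nat \<Rightarrow> nat) \<Rightarrow> nat \<Rightarrow> nat" where
  "pat213 n \<sigma> i = card {j. inv \<sigma> i < j \<and> j < n + 1 \<and> \<sigma> j < i \<and> i < \<sigma> (j + 1)}"

definition psiFV :: "nat \<Rightarrow> (nat \<Rightarrow> nat) \<Rightarrow> step list \<times> nat list" where
  "psiFV n \<sigma> = (map (fv_step n \<sigma>) [1..<n+1], map (pat213 n \<sigma>) [1..<n+1])"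

section \<open>Yan--Zhou--Lin\<close>

definition yzl_step :: "nat \<Rightarrow> (nat \<Rightarrow> nat) \<Rightarrow> nat \<Rightarrow> step" where
  "yzl_step n \<sigma> i =
     (if i < \<sigma> i \<and> i + 1 \<le> inv \<sigma> (i + 1) then U
      else if \<sigma> i \<le> i \<and> i + 1 > inv \<sigma> (i + 1) then D
      else if i < \<sigma> i \<and> i + 1 > inv \<sigma> (i + 1) then Lb
      else Lr)"

definition nest :: "nat \<Rightarrow> (nat \<Rightarrow> nat) \<Rightarrow> nat \<Rightarrow> nat" where
  "nest n \<sigma> i = card {j \<in> {1..n+1}.
      (j < i \<and> i < \<sigma> i \<and> \<sigma> i < \<sigma> j) \<or> (\<sigma> j < \<sigma> i \<and> \<sigma> i \<le> i \<and> i < j)}"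

definition psiYZL :: "nat \<Rightarrow> (nat \<Rightarrow> nat) \<Rightarrow> step list \<times> nat list" where
  "psiYZL n \<sigma> = (map (yzl_step n \<sigma>) [1..<n+1], map (nest n \<sigma>) [1..<n+1])"

section \<open>Clarke--Steingrimsson--Zeng bijection Phi on S_m\<close>

definition desc_bottoms :: "nat \<Rightarrow> (nat \<Rightarrow> nat) \<Rightarrow> nat set" where
  "desc_bottoms m \<sigma> = {\<sigma> i | i. 2 \<le> i \<and> i \<le> m \<and> \<sigma> (i - 1) > \<sigma> i}"

definition desc_tops :: "nat \<Rightarrow> (nat \<Rightarrow> nat) \<Rightarrow> nat set" where
  "desc_tops m \<sigma> = {\<sigma> i | i. 1 \<le> i \<and> i < m \<and> \<sigma> i > \<sigma> (i + 1)}"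

definition pat231 :: "nat \<Rightarrow> (nat \<Rightarrow> nat) \<Rightarrow> nat \<Rightarrow> nat" where
  "pat231 m \<sigma> x = card {j. inv \<sigma> x < j \<and> j < m \<and> \<sigma> (j + 1) < x \<and> x < \<sigma> j}"

definition fprime :: "nat \<Rightarrow> (nat \<Rightarrow> nat) \<Rightarrow> nat list" where
  "fprime m \<sigma> = (THE l. distinct l \<and> set l = desc_tops m \<sigma> \<and>
      (\<forall>k < length l. card {a. a < k \<and> l ! a > l ! k} = pat231 m \<sigma> (l ! k)))"

definition gprime :: "nat \<Rightarrow> (nat \<Rightarrow> nat) \<Rightarrow> nat list" where
  "gprime m \<sigma> = (THE l. distinct l \<and> set l = {1..m} - desc_tops m \<sigma> \<and>
      (\<forall>k < length l. card {b. k < b \<and> b < length l \<and> l ! b < l ! k} = pat231 m \<sigma> (l ! k)))"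

text \<open>Phi(sigma)(y) is the top letter of the column of the biword (f g / f' g')
  whose bottom letter is y.\<close>
definition Phi :: "nat \<Rightarrow> (nat \<Rightarrow> nat) \<Rightarrow> nat \<Rightarrow> nat" where
  "Phi m \<sigma> y =
     (case map_of (zip (fprime m \<sigma>) (sorted_list_of_set (desc_bottoms m \<sigma>))
                   @ zip (gprime m \<sigma>) (sorted_list_of_set ({1..m} - desc_bottoms m \<sigma>))) y
      of Some v \<Rightarrow> v | None \<Rightarrow> y)"

definition hat :: "nat \<Rightarrow> (nat \<Rightarrow> nat) \<Rightarrow> nat \<Rightarrow> nat" where
  "hat n \<sigma> i = (if 1 \<le> i \<and> i \<le> n + 1 then \<sigma> i + 1 else if i = n + 2 then 1 else i)"

definition Psi :: "nat \<Rightarrow> (nat \<Rightarrow> nat) \<Rightarrow> nat \<Rightarrow> nat" where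
  "Psi n \<sigma> i = (if 1 \<le> i \<and> i \<le> n + 1 then Phi (n + 2) (hat n \<sigma>) (i + 1) else i)"

end

theory Submission
  imports Defs
begin

text \<open>
  Put \<tau> = \<Phi>(hat \<sigma>), where hat \<sigma> is the word (\<sigma>+1) 1. Both letters s_i are determined by
  whether i+1 is a descent bottom and/or a descent top of hat \<sigma>: for psi_FV this is the
  valley/peak classification of i in \<sigma>; for psi_YZL it holds because \<tau> maps the tops
  increasingly (along f') onto the bottoms and the other values increasingly (along g') onto the
  non-bottoms, so that counting inversions gives \<tau> x < x exactly for tops and x < inv \<tau> x
  exactly for bottoms. For the weights, the nestings of \<tau> at x = i+1 are the inversions
  prescribed by (2-31)_x, except that for a non-top the nesting with the letter 1 is not
  counted; and as hat \<sigma> ends with its minimum, the down-crossings of the level x after its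
  position, counted by (2-31)_x, exceed the up-crossings, counted by (2-13)_i \<sigma>, by one
  exactly for non-tops.
\<close>

section \<open>Arrangements with a prescribed inversion table\<close>

lemma takeWhile_neq_append_Cons [simp]:
  "y \<notin> set pre \<Longrightarrow> takeWhile (\<lambda>z. z \<noteq> y) (pre @ y # post) = pre"
  by (induction pre) auto

lemma filter_takeWhile_neq_insert:
  assumes "x \<notin> set (pre @ post)" "y \<in> set (pre @ post)" "\<not> P x"
  shows "filter P (takeWhile (\<lambda>z. z \<noteq> y) (pre @ x # post))
       = filter P (takeWhile (\<lambda>z. z \<noteq> y) (pre @ post))"
  using assms
proof (induction pre)
  case Nil
  then have "x \<noteq> y" by auto
  with Nil show ?case by simp
next
  case (Cons a pre)
  then show ?case by (cases "a = y") auto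
qed

text \<open>The paper's f' is such an arrangement for h = id, the reversal of g' one for
  h = - int.\<close>

definition inversion_arrangement ::
    "('a \<Rightarrow> 'b::linorder) \<Rightarrow> ('a \<Rightarrow> nat) \<Rightarrow> 'a set \<Rightarrow> 'a list \<Rightarrow> bool" where
  "inversion_arrangement h c A l \<longleftrightarrow> distinct l \<and> set l = A \<and>
     (\<forall>y\<in>A. length (filter (\<lambda>z. h y < h z) (takeWhile (\<lambda>z. z \<noteq> y) l)) = c y)"

lemma obtain_strict_min_on:
  fixes h :: "'a \<Rightarrow> 'b::linorder"
  assumes "finite A" "A \<noteq> {}" "inj_on h A"
  obtains x0 where "x0 \<in> A" "\<forall>y\<in>A - {x0}. h x0 < h y"
proof -
  let ?x0 = "arg_min_on h A"
  have x0: "?x0 \<in> A" "\<forall>y\<in>A. \<not> h y < h ?x0" using arg_min_if_finite[OF assms(1,2)] by auto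
  have "h ?x0 < h y" if "y \<in> A - {?x0}" for y
  proof -
    have "h y \<noteq> h ?x0" using assms(3) x0(1) that by (auto dest: inj_onD)
    then show ?thesis using x0(2) that by (metis DiffD1 not_less le_neq_trans)
  qed
  then show ?thesis using that x0(1) by blast
qed

lemma inversion_arrangement_insert_min:
  assumes x0: "x0 \<in> A" and min: "\<forall>y\<in>A - {x0}. h x0 < h y"
  shows "inversion_arrangement h c A (pre @ x0 # post) \<longleftrightarrow>
    inversion_arrangement h c (A - {x0}) (pre @ post) \<and> x0 \<notin> set (pre @ post) \<and> length pre = c x0"
proof (cases "distinct (pre @ x0 # post) \<and> set (pre @ x0 # post) = A")
  case True
  then have dist: "distinct (pre @ x0 # post)" and A: "A = insert x0 (set (pre @ post))"
    and x0_new: "x0 \<notin> set (pre @ post)" by auto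
  then have larger: "\<forall>z\<in>set (pre @ post). h x0 < h z" using min by auto
  have count: "filter (\<lambda>z. h y < h z) (takeWhile (\<lambda>z. z \<noteq> y) (pre @ x0 # post))
      = filter (\<lambda>z. h y < h z) (takeWhile (\<lambda>z. z \<noteq> y) (pre @ post))"
    if "y \<in> set (pre @ post)" for y
  proof (rule filter_takeWhile_neq_insert[OF x0_new that])
    show "\<not> h y < h x0" using larger that by (blast dest: less_not_sym)
  qed
  show ?thesis
    unfolding inversion_arrangement_def using dist x0_new A larger
    by (auto simp: count filter_id_conv)
qed (use x0 in \<open>auto simp: inversion_arrangement_def\<close>)

lemma inversion_arrangement_exists:
  assumes "finite A" "inj_on h A" "\<forall>x\<in>A. c x \<le> card {y\<in>A. h x < h y}"
  shows "\<exists>l. inversion_arrangement h c A l"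
  using assms
proof (induction A rule: finite_remove_induct)
  case empty
  show ?case by (auto simp: inversion_arrangement_def)
next
  case (remove A)
  obtain x0 where x0: "x0 \<in> A" "\<forall>y\<in>A - {x0}. h x0 < h y"
    using obtain_strict_min_on[OF remove(1,2,5)] by blast
  have above_x0: "{y\<in>A. h x0 < h y} = A - {x0}" using x0(2) by auto
  have same_count: "{y\<in>A - {x0}. h x < h y} = {y\<in>A. h x < h y}" if "x \<in> A - {x0}" for x
    using x0(2) that by (auto dest: less_asym)
  obtain l where l: "inversion_arrangement h c (A - {x0}) l"
    using remove.IH[OF x0(1)] remove(5,6) same_count by (auto intro: inj_on_subset)
  have "c x0 \<le> card (A - {x0})" using remove(6) x0(1) above_x0 by auto
  then have "c x0 \<le> length l" "x0 \<notin> set l"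
    using l unfolding inversion_arrangement_def by (metis distinct_card, blast)
  then have "inversion_arrangement h c A (take (c x0) l @ x0 # drop (c x0) l)"
    using l inversion_arrangement_insert_min[OF x0, of c "take (c x0) l" "drop (c x0) l"] by simp
  then show ?case by blast
qed

lemma inversion_arrangement_unique:
  "finite A \<Longrightarrow> inj_on h A \<Longrightarrow> inversion_arrangement h c A l1 \<Longrightarrow>
   inversion_arrangement h c A l2 \<Longrightarrow> l1 = l2"
proof (induction A arbitrary: l1 l2 rule: finite_remove_induct)
  case empty
  then show ?case by (simp add: inversion_arrangement_def)
next
  case (remove A)
  obtain x0 where x0: "x0 \<in> A" "\<forall>y\<in>A - {x0}. h x0 < h y"
    using obtain_strict_min_on[OF remove(1,2) remove.prems(1)] by blast
  have "x0 \<in> set l1" "x0 \<in> set l2"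
    using remove.prems(2,3) x0 unfolding inversion_arrangement_def by auto
  then obtain pre1 post1 pre2 post2
    where l1: "l1 = pre1 @ x0 # post1" and l2: "l2 = pre2 @ x0 # post2"
    by (metis split_list)
  note removed = inversion_arrangement_insert_min[OF x0]
  have inj: "inj_on h (A - {x0})" using remove.prems(1) by (rule inj_on_subset) auto
  have l1': "inversion_arrangement h c (A - {x0}) (pre1 @ post1)" "length pre1 = c x0"
    using remove.prems(2) by (simp_all add: l1 removed)
  have l2': "inversion_arrangement h c (A - {x0}) (pre2 @ post2)" "length pre2 = c x0"
    using remove.prems(3) by (simp_all add: l2 removed)
  have "pre1 @ post1 = pre2 @ post2" using remove.IH[OF x0(1) inj l1'(1) l2'(1)] .
  then show ?case using l1 l2 l1'(2) l2'(2) by simp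
qed

lemma ex1_inversion_arrangement:
  assumes "finite A" "inj_on h A" "\<forall>x\<in>A. c x \<le> card {y\<in>A. h x < h y}"
  shows "\<exists>!l. inversion_arrangement h c A l"
  using inversion_arrangement_exists[OF assms] inversion_arrangement_unique[OF assms(1,2)]
  by blast

lemma card_before_nth_eq_length_filter:
  assumes "distinct l" "k < length l"
  shows "card {a. a < k \<and> P (l ! a)} = length (filter P (takeWhile (\<lambda>z. z \<noteq> l ! k) l))"
proof -
  have split: "l = take k l @ l ! k # drop (Suc k) l" using assms(2) by (simp add: id_take_nth_drop)
  have "distinct (take k l @ l ! k # drop (Suc k) l)" using assms(1) split by metis
  then have "l ! k \<notin> set (take k l)" by simp
  then have "takeWhile (\<lambda>z. z \<noteq> l ! k) l = take k l" using split by (metis takeWhile_neq_append_Cons)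
  moreover have "{a. a < length (take k l) \<and> P (take k l ! a)} = {a. a < k \<and> P (l ! a)}"
    using assms(2) by auto
  ultimately show ?thesis by (simp add: length_filter_conv_card)
qed

lemma card_after_nth_eq_length_filter:
  assumes "distinct l" "k < length l"
  shows "card {b. k < b \<and> b < length l \<and> P (l ! b)}
       = length (filter P (takeWhile (\<lambda>z. z \<noteq> l ! k) (rev l)))"
proof -
  have split: "rev l = rev (drop (Suc k) l) @ l ! k # rev (take k l)"
    using assms(2) by (subst id_take_nth_drop[of k l]) simp_all
  have "distinct (rev (drop (Suc k) l) @ l ! k # rev (take k l))" using assms(1) split by (metis distinct_rev)
  then have "l ! k \<notin> set (rev (drop (Suc k) l))" by simp
  then have "takeWhile (\<lambda>z. z \<noteq> l ! k) (rev l) = rev (drop (Suc k) l)"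
    using split by (metis takeWhile_neq_append_Cons)
  moreover have "{b. k < b \<and> b < length l \<and> P (l ! b)}
      = (\<lambda>i. Suc k + i) ` {i. i < length l - Suc k \<and> P (l ! (Suc k + i))}"
  proof (rule set_eqI, rule iffI)
    fix b assume "b \<in> {b. k < b \<and> b < length l \<and> P (l ! b)}"
    then show "b \<in> (\<lambda>i. Suc k + i) ` {i. i < length l - Suc k \<and> P (l ! (Suc k + i))}"
      by (intro image_eqI[of _ _ "b - Suc k"]) auto
  qed auto
  moreover have "length (filter P (drop (Suc k) l))
      = card {i. i < length l - Suc k \<and> P (l ! (Suc k + i))}"
    using assms(2) by (simp add: length_filter_conv_card)
  ultimately show ?thesis by (simp add: card_image inj_on_def rev_filter[symmetric])
qed

lemma inversion_arrangement_iff_nth: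
  "inversion_arrangement h c A l \<longleftrightarrow> distinct l \<and> set l = A \<and>
     (\<forall>k<length l. card {a. a < k \<and> h (l ! k) < h (l ! a)} = c (l ! k))"
proof (cases "distinct l \<and> set l = A")
  case True
  then have A: "A = set l" and dist: "distinct l" by auto
  have eq: "card {a. a < k \<and> h (l ! k) < h (l ! a)}
      = length (filter (\<lambda>z. h (l ! k) < h z) (takeWhile (\<lambda>z. z \<noteq> l ! k) l))"
    if "k < length l" for k
    using card_before_nth_eq_length_filter[OF _ that, of "\<lambda>z. h (l ! k) < h z"] dist by simp
  show ?thesis
    unfolding inversion_arrangement_def A using dist eq by (simp add: all_set_conv_all_nth)
qed (auto simp: inversion_arrangement_def)

lemma inversion_arrangement_rev_iff_nth:
  "inversion_arrangement h c A (rev l) \<longleftrightarrow> distinct l \<and> set l = A \<and>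
     (\<forall>k<length l. card {b. k < b \<and> b < length l \<and> h (l ! k) < h (l ! b)} = c (l ! k))"
proof (cases "distinct l \<and> set l = A")
  case True
  then have A: "A = set l" and dist: "distinct l" by auto
  have eq: "card {b. k < b \<and> b < length l \<and> h (l ! k) < h (l ! b)}
      = length (filter (\<lambda>z. h (l ! k) < h z) (takeWhile (\<lambda>z. z \<noteq> l ! k) (rev l)))"
    if "k < length l" for k
    using card_after_nth_eq_length_filter[OF _ that, of "\<lambda>z. h (l ! k) < h z"] dist by simp
  show ?thesis
    unfolding inversion_arrangement_def A using dist eq by (simp add: all_set_conv_all_nth)
qed (auto simp: inversion_arrangement_def)

lemma strict_sorted_map_split:
  fixes f :: "'a \<Rightarrow> 'b::linorder"
  assumes "sorted_wrt (<) (map f l)" "l = pre @ x # post"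
  shows "set pre = {y\<in>set l. f y < f x}" "set post = {y\<in>set l. f x < f y}"
proof -
  have "\<forall>y\<in>set pre. f y < f x" "\<forall>y\<in>set post. f x < f y"
    using assms by (auto simp: sorted_wrt_append)
  then show "set pre = {y\<in>set l. f y < f x}" "set post = {y\<in>set l. f x < f y}"
    using assms(2) by fastforce+
qed

lemma card_less_image:
  assumes "inj_on f A" "x \<in> A"
  shows "card {b\<in>f ` A. b < f x} = card {y\<in>A. f y < f x}"
proof -
  have "{b\<in>f ` A. b < f x} = f ` {y\<in>A. f y < f x}" by auto
  then show ?thesis using assms(1) by (simp add: card_image inj_on_subset)
qed

lemma less_if_card_less_below:
  fixes a x :: nat
  assumes "finite B" "card {b\<in>B. b < a} < card {b\<in>B. b < x}"
  shows "a < x"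
proof (rule ccontr)
  assume "\<not> a < x"
  then have "card {b\<in>B. b < x} \<le> card {b\<in>B. b < a}" using assms(1) by (intro card_mono) auto
  with assms(2) show False by simp
qed

lemma card_less_below_if_less:
  fixes a x :: nat
  assumes "finite B" "a \<in> B" "a < x"
  shows "card {b\<in>B. b < a} < card {b\<in>B. b < x}"
  using assms by (intro psubset_card_mono) auto

lemma card_below_Diff:
  assumes "A \<subseteq> {1..m}" "x \<in> {1..(m::nat)}"
  shows "card {y\<in>{1..m} - A. y < x} = (x - 1) - card {y\<in>A. y < x}"
proof -
  have "{y\<in>{1..m} - A. y < x} = {1..<x} - {y\<in>A. y < x}" using assms by auto
  moreover have "{y\<in>A. y < x} \<subseteq> {1..<x}" using assms by auto
  ultimately show ?thesis by (simp add: card_Diff_subset finite_subset)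
qed

section \<open>Crossings of a level\<close>

definition down_crossings :: "(nat \<Rightarrow> nat) \<Rightarrow> nat \<Rightarrow> nat \<Rightarrow> nat \<Rightarrow> nat set" where
  "down_crossings s x p e = {j. p < j \<and> j < e \<and> s (j + 1) < x \<and> x < s j}"

definition up_crossings :: "(nat \<Rightarrow> nat) \<Rightarrow> nat \<Rightarrow> nat \<Rightarrow> nat \<Rightarrow> nat set" where
  "up_crossings s x p e = {j. p < j \<and> j < e \<and> s j < x \<and> x < s (j + 1)}"

lemma card_interval_Suc:
  "card {j. p < j \<and> j < Suc e \<and> Q j} = card {j. p < j \<and> j < e \<and> Q j} + of_bool (p < e \<and> Q e)"
proof (cases "p < e \<and> Q e")
  case True
  then have "{j. p < j \<and> j < Suc e \<and> Q j} = insert e {j. p < j \<and> j < e \<and> Q j}"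
    by (auto simp: less_Suc_eq)
  then show ?thesis using True by simp
next
  case False
  then have "{j. p < j \<and> j < Suc e \<and> Q j} = {j. p < j \<and> j < e \<and> Q j}"
    by (auto simp: less_Suc_eq)
  then show ?thesis using False by simp
qed

text \<open>Telescoping along the walk j \<mapsto> s j, which never visits the level x: each
  down-crossing moves it from above x to below, each up-crossing back.\<close>

lemma card_down_minus_up_crossings:
  "Suc p \<le> e \<Longrightarrow> (\<forall>j. p < j \<and> j \<le> e \<longrightarrow> s j \<noteq> x) \<Longrightarrow>
   int (card (down_crossings s x p e)) - int (card (up_crossings s x p e))
     = of_bool (x < s (Suc p)) - of_bool (x < s e)"
proof (induction e rule: nat_induct_at_least)
  case base
  have "down_crossings s x p (Suc p) = {}" "up_crossings s x p (Suc p) = {}"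
    by (auto simp: down_crossings_def up_crossings_def)
  then show ?case by simp
next
  case (Suc e)
  have IH: "int (card (down_crossings s x p e)) - int (card (up_crossings s x p e))
      = of_bool (x < s (Suc p)) - of_bool (x < s e)"
    using Suc by simp
  have "s e \<noteq> x" "s (Suc e) \<noteq> x" using Suc by auto
  then have "int (of_bool (s (Suc e) < x \<and> x < s e)) - int (of_bool (s e < x \<and> x < s (Suc e)))
      = of_bool (x < s e) - of_bool (x < s (Suc e))"
    by (cases "x < s e"; cases "x < s (Suc e)") auto
  moreover have "card (down_crossings s x p (Suc e))
      = card (down_crossings s x p e) + of_bool (s (Suc e) < x \<and> x < s e)"
    using Suc(1) card_interval_Suc[of p e "\<lambda>j. s (Suc j) < x \<and> x < s j"]
    by (simp add: down_crossings_def)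
  moreover have "card (up_crossings s x p (Suc e))
      = card (up_crossings s x p e) + of_bool (s e < x \<and> x < s (Suc e))"
    using Suc(1) card_interval_Suc[of p e "\<lambda>j. s j < x \<and> x < s (Suc j)"]
    by (simp add: up_crossings_def)
  ultimately show ?case using IH by simp
qed

section \<open>The bijection \<Phi>\<close>

definition descents :: "nat \<Rightarrow> (nat \<Rightarrow> nat) \<Rightarrow> nat set" where
  "descents m s = {j. 1 \<le> j \<and> j < m \<and> s (Suc j) < s j}"

locale interval_permutation =
  fixes m :: nat and s :: "nat \<Rightarrow> nat"
  assumes permutes: "s permutes {1..m}"
begin

abbreviation "tops \<equiv> desc_tops m s"
abbreviation "bottoms \<equiv> desc_bottoms m s"
abbreviation "nontops \<equiv> {1..m} - tops"
abbreviation "nonbottoms \<equiv> {1..m} - bottoms"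
abbreviation "\<tau> \<equiv> Phi m s"

lemma in_interval: "j \<in> {1..m} \<Longrightarrow> s j \<in> {1..m}"
  using permutes_in_image[OF permutes] by blast

lemma inv_in_interval: "x \<in> {1..m} \<Longrightarrow> inv s x \<in> {1..m}"
  using permutes_in_image[OF permutes_inv[OF permutes]] by blast

lemma apply_inv [simp]: "s (inv s x) = x"
  using permutes_inverses(1)[OF permutes] .

lemma inv_apply [simp]: "inv s (s i) = i"
  using permutes_inverses(2)[OF permutes] .

lemma inj_s: "inj s"
  using permutes by (rule permutes_inj)

lemma apply_eq_iff [simp]: "s i = s j \<longleftrightarrow> i = j"
  using inj_s by (rule inj_eq)

lemma card_image_s: "card (s ` A) = card A"
  by (simp add: card_image inj_on_def)

lemma tops_eq: "tops = s ` descents m s"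
  unfolding desc_tops_def descents_def by auto

lemma bottoms_eq: "bottoms = (\<lambda>j. s (Suc j)) ` descents m s"
proof (rule set_eqI, rule iffI)
  fix x assume "x \<in> bottoms"
  then obtain i where "x = s i" "2 \<le> i" "i \<le> m" "s i < s (i - 1)"
    unfolding desc_bottoms_def by auto
  then show "x \<in> (\<lambda>j. s (Suc j)) ` descents m s"
    unfolding descents_def by (intro image_eqI[of _ _ "i - 1"]) auto
next
  fix x assume "x \<in> (\<lambda>j. s (Suc j)) ` descents m s"
  then obtain j where "x = s (Suc j)" "1 \<le> j" "j < m" "s (Suc j) < s j"
    unfolding descents_def by auto
  then show "x \<in> bottoms"
    unfolding desc_bottoms_def by (intro CollectI exI[of _ "Suc j"]) auto
qed

lemma descents_subset: "descents m s \<subseteq> {1..<m}"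
  unfolding descents_def by auto

lemma finite_descents: "finite (descents m s)"
  using finite_subset[OF descents_subset] by simp

lemma tops_subset: "tops \<subseteq> {1..m}"
  unfolding tops_eq using descents_subset in_interval by auto

lemma bottoms_subset: "bottoms \<subseteq> {1..m}"
  unfolding bottoms_eq using descents_subset in_interval by auto

lemma finite_tops: "finite tops" and finite_bottoms: "finite bottoms"
  using finite_subset[OF tops_subset] finite_subset[OF bottoms_subset] by simp_all

lemma card_tops_eq_card_bottoms: "card tops = card bottoms"
proof -
  have "inj_on (\<lambda>j. s (Suc j)) (descents m s)" by (simp add: inj_on_def)
  then show ?thesis unfolding tops_eq bottoms_eq by (simp add: card_image card_image_s)
qed

lemma top_iff:
  assumes "x \<in> {1..m}"
  shows "x \<in> tops \<longleftrightarrow> inv s x < m \<and> s (Suc (inv s x)) < x"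
proof
  assume "x \<in> tops"
  then obtain i where "x = s i" "i < m" "s (Suc i) < s i" unfolding desc_tops_def by auto
  then show "inv s x < m \<and> s (Suc (inv s x)) < x" by simp
next
  assume "inv s x < m \<and> s (Suc (inv s x)) < x"
  then show "x \<in> tops"
    using inv_in_interval[OF assms] unfolding desc_tops_def
    by (intro CollectI exI[of _ "inv s x"]) auto
qed

lemma bottom_iff:
  assumes "x \<in> {1..m}"
  shows "x \<in> bottoms \<longleftrightarrow> 2 \<le> inv s x \<and> x < s (inv s x - 1)"
proof
  assume "x \<in> bottoms"
  then obtain i where "x = s i" "2 \<le> i" "s i < s (i - 1)" unfolding desc_bottoms_def by auto
  then show "2 \<le> inv s x \<and> x < s (inv s x - 1)" by simp
next
  assume "2 \<le> inv s x \<and> x < s (inv s x - 1)"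
  then show "x \<in> bottoms"
    using inv_in_interval[OF assms] unfolding desc_bottoms_def
    by (intro CollectI exI[of _ "inv s x"]) auto
qed

lemma pat231_eq_card_down_crossings: "pat231 m s x = card (down_crossings s x (inv s x) m)"
  by (simp add: pat231_def down_crossings_def)

lemma card_tops_below: "card {t\<in>tops. t < x} = card {j\<in>descents m s. s j < x}"
proof -
  have "{t\<in>tops. t < x} = s ` {j\<in>descents m s. s j < x}" unfolding tops_eq by auto
  then show ?thesis by (simp add: card_image_s)
qed

lemma card_bottoms_below: "card {b\<in>bottoms. b < x} = card {j\<in>descents m s. s (Suc j) < x}"
proof -
  have "{b\<in>bottoms. b < x} = (\<lambda>j. s (Suc j)) ` {j\<in>descents m s. s (Suc j) < x}"
    unfolding bottoms_eq by auto
  moreover have "inj_on (\<lambda>j. s (Suc j)) A" for A by (simp add: inj_on_def)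
  ultimately show ?thesis by (simp add: card_image)
qed

text \<open>The descents with top below x, the 2-31 occurrences of x and, if x is a top, the
  descent at x itself are disjoint sets of descents with bottom below x.\<close>

lemma card_tops_below_add_pat231_le:
  assumes x: "x \<in> {1..m}"
  shows "card {t\<in>tops. t < x} + pat231 m s x + of_bool (x \<in> tops) \<le> card {b\<in>bottoms. b < x}"
proof -
  define p where "p = inv s x"
  have p: "p \<in> {1..m}" "s p = x" using inv_in_interval[OF x] p_def by auto
  define D1 where "D1 = {j\<in>descents m s. s j < x}"
  define D2 where "D2 = down_crossings s x p m"
  define D3 where "D3 = descents m s \<inter> {p}"
  have D2_sub: "D2 \<subseteq> descents m s" unfolding D2_def down_crossings_def descents_def using p by auto
  have "pat231 m s x = card D2" unfolding pat231_eq_card_down_crossings D2_def p_def ..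
  moreover have "card D3 = of_bool (x \<in> tops)"
  proof -
    have "x \<in> tops \<longleftrightarrow> p \<in> descents m s" using p(2) unfolding tops_eq by auto
    then show ?thesis unfolding D3_def by auto
  qed
  moreover have "card (D1 \<union> D2 \<union> D3) = card D1 + card D2 + card D3"
  proof -
    have "finite D1" "finite D2" "finite D3"
      using finite_descents D2_sub unfolding D1_def D3_def by (auto intro: finite_subset)
    moreover have "D1 \<inter> D2 = {}" "(D1 \<union> D2) \<inter> D3 = {}"
      unfolding D1_def D2_def D3_def down_crossings_def using p by auto
    ultimately show ?thesis by (simp add: card_Un_disjoint)
  qed
  moreover have "card (D1 \<union> D2 \<union> D3) \<le> card {j\<in>descents m s. s (Suc j) < x}"
  proof (rule card_mono)
    show "D1 \<union> D2 \<union> D3 \<subseteq> {j\<in>descents m s. s (Suc j) < x}"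
      using D2_sub p unfolding D1_def D2_def D3_def down_crossings_def descents_def by auto
  qed (simp add: finite_descents)
  ultimately show ?thesis unfolding card_tops_below card_bottoms_below D1_def by simp
qed

lemma pat231_le_card_tops_above: "pat231 m s x \<le> card {y\<in>tops. x < y}"
proof -
  have "s j \<in> tops \<and> x < s j" if "j \<in> down_crossings s x (inv s x) m" for j
    using that unfolding tops_eq down_crossings_def descents_def by auto
  then have "card (s ` down_crossings s x (inv s x) m) \<le> card {y\<in>tops. x < y}"
    using finite_tops by (intro card_mono) auto
  then show ?thesis
    by (simp add: pat231_eq_card_down_crossings card_image_s)
qed

lemma pat231_le_card_nontops_below:
  assumes "x \<in> nontops"
  shows "pat231 m s x \<le> card {y\<in>nontops. y < x}"
proof -
  have x: "x \<in> {1..m}" using assms by simp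
  have "card {b\<in>bottoms. b < x} \<le> card {1..<x}"
    using bottoms_subset by (intro card_mono) auto
  then have "card {b\<in>bottoms. b < x} \<le> x - 1" by simp
  then show ?thesis
    using card_tops_below_add_pat231_le[OF x] card_below_Diff[OF tops_subset x] by linarith
qed

lemma fprime_arrangement: "inversion_arrangement (\<lambda>z. z) (pat231 m s) tops (fprime m s)"
proof -
  have "\<exists>!l. inversion_arrangement (\<lambda>z::nat. z) (pat231 m s) tops l"
    using finite_tops pat231_le_card_tops_above by (intro ex1_inversion_arrangement) auto
  then show ?thesis
    unfolding fprime_def inversion_arrangement_iff_nth by (rule theI')
qed

lemma gprime_arrangement:
  "inversion_arrangement (\<lambda>z. - int z) (pat231 m s) nontops (rev (gprime m s))"
proof -
  have "\<exists>!l. inversion_arrangement (\<lambda>z. - int z) (pat231 m s) nontops l"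
    using pat231_le_card_nontops_below
    by (intro ex1_inversion_arrangement) (auto simp: inj_on_def)
  then obtain l where l: "inversion_arrangement (\<lambda>z. - int z) (pat231 m s) nontops l"
    and unique: "\<And>l'. inversion_arrangement (\<lambda>z. - int z) (pat231 m s) nontops l' \<Longrightarrow> l' = l"
    by blast
  have P_iff: "(distinct l' \<and> set l' = nontops \<and>
      (\<forall>k<length l'. card {b. k < b \<and> b < length l' \<and> l' ! b < l' ! k} = pat231 m s (l' ! k)))
    \<longleftrightarrow> inversion_arrangement (\<lambda>z. - int z) (pat231 m s) nontops (rev l')" for l'
    by (simp add: inversion_arrangement_rev_iff_nth)
  have "gprime m s = rev l"
    unfolding gprime_def P_iff
  proof (rule the_equality)
    show "inversion_arrangement (\<lambda>z. - int z) (pat231 m s) nontops (rev (rev l))" using l by simp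
    show "l' = rev l" if "inversion_arrangement (\<lambda>z. - int z) (pat231 m s) nontops (rev l')" for l'
      using unique[OF that] by (metis rev_rev_ident)
  qed
  then show ?thesis using l by simp
qed

lemma set_fprime: "set (fprime m s) = tops" and distinct_fprime: "distinct (fprime m s)"
  using fprime_arrangement unfolding inversion_arrangement_def by auto

lemma set_gprime: "set (gprime m s) = nontops" and distinct_gprime: "distinct (gprime m s)"
  using gprime_arrangement unfolding inversion_arrangement_def by auto

lemma length_fprime: "length (fprime m s) = length (sorted_list_of_set bottoms)"
  using distinct_card[OF distinct_fprime] set_fprime card_tops_eq_card_bottoms by simp

lemma length_gprime: "length (gprime m s) = length (sorted_list_of_set nonbottoms)"
proof -
  have "length (gprime m s) = m - card tops"
    using distinct_card[OF distinct_gprime] set_gprime tops_subset finite_tops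
    by (simp add: card_Diff_subset)
  then show ?thesis
    using card_tops_eq_card_bottoms bottoms_subset finite_bottoms by (simp add: card_Diff_subset)
qed

lemma map_Phi_fprime: "map \<tau> (fprime m s) = sorted_list_of_set bottoms"
proof (rule nth_equalityI)
  fix k assume "k < length (map \<tau> (fprime m s))"
  then have "map_of (zip (fprime m s) (sorted_list_of_set bottoms)) (fprime m s ! k)
      = Some (sorted_list_of_set bottoms ! k)"
    using map_of_zip_nth[OF length_fprime distinct_fprime] length_fprime by simp
  then show "map \<tau> (fprime m s) ! k = sorted_list_of_set bottoms ! k"
    using \<open>k < _\<close> unfolding Phi_def by (simp add: map_add_find_right)
qed (simp add: length_fprime)

lemma map_Phi_gprime: "map \<tau> (gprime m s) = sorted_list_of_set nonbottoms"
proof (rule nth_equalityI)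
  fix k assume k: "k < length (map \<tau> (gprime m s))"
  then have "map_of (zip (gprime m s) (sorted_list_of_set nonbottoms)) (gprime m s ! k)
      = Some (sorted_list_of_set nonbottoms ! k)"
    using map_of_zip_nth[OF length_gprime distinct_gprime] length_gprime by simp
  moreover have "map_of (zip (fprime m s) (sorted_list_of_set bottoms)) (gprime m s ! k) = None"
    using k set_fprime set_gprime length_fprime nth_mem[of k "gprime m s"]
    by (auto simp: map_of_eq_None_iff dest: set_zip_leftD)
  ultimately show "map \<tau> (gprime m s) ! k = sorted_list_of_set nonbottoms ! k"
    using k unfolding Phi_def by (simp add: map_add_def)
qed (simp add: length_gprime)

lemma Phi_outside:
  assumes "y \<notin> {1..m}"
  shows "\<tau> y = y"
proof -
  have "y \<notin> set (fprime m s)" "y \<notin> set (gprime m s)"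
    using assms set_fprime set_gprime tops_subset by auto
  then have "map_of (zip (fprime m s) (sorted_list_of_set bottoms)
      @ zip (gprime m s) (sorted_list_of_set nonbottoms)) y = None"
    by (auto simp: map_of_eq_None_iff dest: set_zip_leftD)
  then show ?thesis unfolding Phi_def by (simp del: map_of_append)
qed

lemma Phi_image_tops: "\<tau> ` tops = bottoms"
  using arg_cong[OF map_Phi_fprime, of set] set_fprime finite_bottoms by simp

lemma Phi_image_nontops: "\<tau> ` nontops = nonbottoms"
  using arg_cong[OF map_Phi_gprime, of set] set_gprime by simp

lemma Phi_permutes: "\<tau> permutes {1..m}"
proof (rule bij_imp_permutes)
  have "\<tau> ` {1..m} = \<tau> ` tops \<union> \<tau> ` nontops" using tops_subset by blast
  also have "\<dots> = {1..m}" using Phi_image_tops Phi_image_nontops bottoms_subset by blast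
  finally show "bij_betw \<tau> {1..m} {1..m}" by (simp add: bij_betw_def finite_surj_inj)
qed (rule Phi_outside)

lemma Phi_in_interval: "y \<in> {1..m} \<Longrightarrow> \<tau> y \<in> {1..m}"
  using permutes_in_image[OF Phi_permutes] by blast

lemma card_Phi_inversions_tops:
  assumes x: "x \<in> tops"
  shows "card {y\<in>tops. x < y \<and> \<tau> y < \<tau> x} = pat231 m s x"
proof -
  obtain pre post where split: "fprime m s = pre @ x # post"
    using x set_fprime by (metis split_list)
  have "sorted_wrt (<) (map \<tau> (fprime m s))"
    by (simp add: map_Phi_fprime strict_sorted_list_of_set)
  then have pre: "set pre = {y\<in>tops. \<tau> y < \<tau> x}"
    using strict_sorted_map_split(1)[OF _ split] set_fprime by simp
  have "x \<notin> set pre" "distinct pre" using distinct_fprime split by auto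
  have "card {y\<in>tops. x < y \<and> \<tau> y < \<tau> x} = card (set (filter (\<lambda>z. x < z) pre))"
    using pre by (auto intro: arg_cong[where f = card])
  also have "\<dots> = length (filter (\<lambda>z. x < z) pre)"
    by (rule distinct_card) (simp add: \<open>distinct pre\<close>)
  also have "\<dots> = length (filter (\<lambda>z. x < z) (takeWhile (\<lambda>z. z \<noteq> x) (fprime m s)))"
    using \<open>x \<notin> set pre\<close> by (simp add: split)
  also have "\<dots> = pat231 m s x"
    using fprime_arrangement x unfolding inversion_arrangement_def by blast
  finally show ?thesis .
qed

lemma card_Phi_inversions_nontops:
  assumes x: "x \<in> nontops"
  shows "card {y\<in>nontops. y < x \<and> \<tau> x < \<tau> y} = pat231 m s x"
proof -
  obtain pre post where split: "gprime m s = pre @ x # post"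
    using x set_gprime by (metis split_list)
  have "sorted_wrt (<) (map \<tau> (gprime m s))"
    by (simp add: map_Phi_gprime strict_sorted_list_of_set)
  then have post: "set post = {y\<in>nontops. \<tau> x < \<tau> y}"
    using strict_sorted_map_split(2)[OF _ split] set_gprime by simp
  have "x \<notin> set post" "distinct post" using distinct_gprime split by auto
  have "card {y\<in>nontops. y < x \<and> \<tau> x < \<tau> y} = card (set (filter (\<lambda>z. z < x) post))"
    using post by (auto intro: arg_cong[where f = card])
  also have "\<dots> = length (filter (\<lambda>z. z < x) post)"
    by (rule distinct_card) (simp add: \<open>distinct post\<close>)
  also have "\<dots> = length (filter (\<lambda>z. - int x < - int z) (takeWhile (\<lambda>z. z \<noteq> x) (rev (gprime m s))))"
    using \<open>x \<notin> set post\<close> by (simp add: split flip: rev_filter)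
  also have "\<dots> = pat231 m s x"
    using gprime_arrangement x unfolding inversion_arrangement_def by blast
  finally show ?thesis .
qed

lemma inj_on_Phi: "inj_on \<tau> A"
  using permutes_inj[OF Phi_permutes] by (rule inj_on_subset) simp

lemma Phi_eq_iff [simp]: "\<tau> a = \<tau> b \<longleftrightarrow> a = b"
  using inj_on_Phi[of UNIV] by (simp add: inj_eq)

text \<open>A rank argument: since \<tau> maps the tops onto the bottoms, the bottoms below \<tau> x
  correspond to tops y with \<tau> y < \<tau> x, and these are fewer than the bottoms below x.\<close>

lemma Phi_less_top:
  assumes x: "x \<in> tops"
  shows "\<tau> x < x"
proof -
  have x_range: "x \<in> {1..m}" using x tops_subset by auto
  have "card {b\<in>bottoms. b < \<tau> x} = card {y\<in>tops. \<tau> y < \<tau> x}"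
    using card_less_image[OF inj_on_Phi x] Phi_image_tops by simp
  also have "\<dots> \<le> card ({y\<in>tops. x < y \<and> \<tau> y < \<tau> x} \<union> {t\<in>tops. t < x})"
    using finite_tops by (intro card_mono) (auto simp: not_less_iff_gr_or_eq)
  also have "\<dots> \<le> pat231 m s x + card {t\<in>tops. t < x}"
    using card_Un_le[of "{y\<in>tops. x < y \<and> \<tau> y < \<tau> x}" "{t\<in>tops. t < x}"]
      card_Phi_inversions_tops[OF x] by simp
  also have "\<dots> < card {b\<in>bottoms. b < x}"
    using card_tops_below_add_pat231_le[OF x_range] x by simp
  finally show ?thesis by (rule less_if_card_less_below[OF finite_bottoms])
qed

lemma Phi_ge_nontop:
  assumes x: "x \<in> nontops"
  shows "x \<le> \<tau> x"
proof (rule ccontr)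
  assume "\<not> x \<le> \<tau> x"
  moreover have "\<tau> x \<in> nonbottoms" using x Phi_image_nontops by blast
  ultimately have "card {b\<in>nonbottoms. b < \<tau> x} < card {b\<in>nonbottoms. b < x}"
    by (intro card_less_below_if_less) auto
  also have "\<dots> = x - 1 - card {b\<in>bottoms. b < x}"
    using card_below_Diff[OF bottoms_subset] x by simp
  also have "\<dots> \<le> card {y\<in>nontops. y < x} - pat231 m s x"
    using card_tops_below_add_pat231_le[of x] card_below_Diff[OF tops_subset, of x] x by simp
  also have "\<dots> \<le> card {y\<in>nontops. \<tau> y < \<tau> x}"
  proof -
    have "card {y\<in>nontops. y < x}
        \<le> card ({y\<in>nontops. \<tau> y < \<tau> x} \<union> {y\<in>nontops. y < x \<and> \<tau> x < \<tau> y})"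
      by (intro card_mono) (auto simp: not_less_iff_gr_or_eq)
    also have "\<dots> \<le> card {y\<in>nontops. \<tau> y < \<tau> x} + pat231 m s x"
      using card_Un_le[of "{y\<in>nontops. \<tau> y < \<tau> x}" "{y\<in>nontops. y < x \<and> \<tau> x < \<tau> y}"]
        card_Phi_inversions_nontops[OF x] by simp
    finally show ?thesis by simp
  qed
  also have "\<dots> = card {b\<in>nonbottoms. b < \<tau> x}"
    using card_less_image[OF inj_on_Phi x] Phi_image_nontops by simp
  finally show False by simp
qed

lemma top_iff_Phi_less:
  assumes "x \<in> {1..m}"
  shows "x \<in> tops \<longleftrightarrow> \<tau> x < x"
proof (cases "x \<in> tops")
  case False
  then have "x \<le> \<tau> x" using assms Phi_ge_nontop by simp
  with False show ?thesis by simp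
qed (simp add: Phi_less_top)

lemma bottom_iff_less_inv_Phi:
  assumes x: "x \<in> {1..m}"
  shows "x \<in> bottoms \<longleftrightarrow> x < inv \<tau> x"
proof -
  define y where "y = inv \<tau> x"
  have y: "y \<in> {1..m}" "\<tau> y = x"
    using permutes_in_image[OF permutes_inv[OF Phi_permutes]] permutes_inverses(1)[OF Phi_permutes] x
    unfolding y_def by auto
  show ?thesis
  proof (cases "y \<in> tops")
    case True
    then have "x \<in> bottoms" using y(2) Phi_image_tops by (metis imageI)
    moreover have "x < y" using Phi_less_top[OF True] y(2) by simp
    ultimately show ?thesis unfolding y_def by simp
  next
    case False
    then have "y \<in> nontops" using y(1) by simp
    then have "x \<in> nonbottoms" using y(2) Phi_image_nontops by (metis imageI)
    moreover have "y \<le> x" using Phi_ge_nontop[OF \<open>y \<in> nontops\<close>] y(2) by simp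
    ultimately show ?thesis unfolding y_def by simp
  qed
qed

lemma pat231_minus_up_crossings:
  assumes last: "s m = 1" and x: "x \<in> {2..m}"
  shows "int (pat231 m s x) - int (card (up_crossings s x (inv s x) m)) = of_bool (x \<notin> tops)"
proof -
  define p where "p = inv s x"
  have p: "p \<in> {1..m}" "s p = x" using inv_in_interval[of x] x p_def by auto
  then have "p < m" using last x by (cases "p = m") auto
  moreover have "\<forall>j. p < j \<and> j \<le> m \<longrightarrow> s j \<noteq> x" using p by auto
  ultimately have "int (pat231 m s x) - int (card (up_crossings s x p m))
      = of_bool (x < s (Suc p)) - of_bool (x < s m)"
    using card_down_minus_up_crossings[of p m s x] by (simp add: pat231_eq_card_down_crossings p_def)
  moreover have "x < s (Suc p) \<longleftrightarrow> x \<notin> tops"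
    using top_iff[of x] x p \<open>p < m\<close> apply_eq_iff[of "Suc p" p] unfolding p_def by auto
  ultimately show ?thesis using last x p_def by simp
qed

text \<open>The non-top with the largest image has no 2-31 occurrence, and among the non-tops
  only the letter 1 has none.\<close>

lemma Phi_one:
  assumes last: "s m = 1"
  shows "\<tau> 1 = m"
proof -
  have "m \<noteq> 0"
  proof
    assume "m = 0"
    then show False using last permutes_not_in[OF permutes, of 0] by simp
  qed
  have "m \<notin> bottoms"
  proof
    assume "m \<in> bottoms"
    then have "2 \<le> inv s m" "m < s (inv s m - 1)" using bottom_iff[of m] \<open>m \<noteq> 0\<close> by auto
    moreover have "inv s m - 1 \<in> {1..m}" using inv_in_interval[of m] \<open>m \<noteq> 0\<close> calculation(1) by auto
    ultimately show False using in_interval by fastforce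
  qed
  with \<open>m \<noteq> 0\<close> have "m \<in> nonbottoms" by simp
  then obtain z where z: "z \<in> nontops" "\<tau> z = m"
    using Phi_image_nontops by (metis imageE)
  have none_above: "{y\<in>nontops. y < z \<and> \<tau> z < \<tau> y} = {}"
    using Phi_in_interval z(2) by fastforce
  have "pat231 m s z = card {y\<in>nontops. y < z \<and> \<tau> z < \<tau> y}"
    by (rule card_Phi_inversions_nontops[OF z(1), symmetric])
  then have "pat231 m s z = 0" unfolding none_above by simp
  then have "z = 1"
    using pat231_minus_up_crossings[OF last, of z] z(1) by (cases "z = 1") auto
  then show ?thesis using z by simp
qed

lemma card_nestings_Phi:
  assumes last: "s m = 1" and x: "x \<in> {2..m}"
  shows "card {y\<in>{2..m}. (y < x \<and> x \<le> \<tau> x \<and> \<tau> x < \<tau> y) \<or> (\<tau> y < \<tau> x \<and> \<tau> x < x \<and> x < y)}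
       = card (up_crossings s x (inv s x) m)"
proof (cases "x \<in> tops")
  case True
  then have "\<tau> x < x" by (rule Phi_less_top)
  then have "{y\<in>{2..m}. (y < x \<and> x \<le> \<tau> x \<and> \<tau> x < \<tau> y) \<or> (\<tau> y < \<tau> x \<and> \<tau> x < x \<and> x < y)}
      = {y\<in>tops. x < y \<and> \<tau> y < \<tau> x}"
    using x tops_subset top_iff_Phi_less by fastforce
  then show ?thesis
    using card_Phi_inversions_tops[OF True] pat231_minus_up_crossings[OF last x] True by simp
next
  case False
  then have x_nontop: "x \<in> nontops" using x by simp
  then have "x \<le> \<tau> x" by (rule Phi_ge_nontop)
  then have "{y\<in>{2..m}. (y < x \<and> x \<le> \<tau> x \<and> \<tau> x < \<tau> y) \<or> (\<tau> y < \<tau> x \<and> \<tau> x < x \<and> x < y)}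
      = {y\<in>nontops. y < x \<and> \<tau> x < \<tau> y} - {1}"
    using x top_iff_Phi_less by fastforce
  moreover have "1 \<in> {y\<in>nontops. y < x \<and> \<tau> x < \<tau> y}"
  proof -
    have "\<tau> x \<le> m" using x Phi_in_interval by auto
    moreover have "\<tau> x \<noteq> m"
    proof
      assume "\<tau> x = m"
      then have "\<tau> x = \<tau> 1" using Phi_one[OF last] by simp
      then show False using x by simp
    qed
    ultimately have "\<tau> x < \<tau> 1" using Phi_one[OF last] by simp
    moreover have "1 \<notin> tops" using top_iff_Phi_less[of 1] Phi_one[OF last] x by simp
    ultimately show ?thesis using x by auto
  qed
  ultimately show ?thesis
    using card_Phi_inversions_nontops[OF x_nontop] pat231_minus_up_crossings[OF last x] False
    by simp
qed

end

section \<open>The word hat \<sigma> and the map \<Psi>\<close>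

text \<open>A value is a valley if it is a descent bottom but no descent top, a peak if it is a
  top but no bottom, a double ascent if it is neither, a double descent if it is both.\<close>

definition step_of_descents :: "bool \<Rightarrow> bool \<Rightarrow> step" where
  "step_of_descents is_bottom is_top =
     (if is_bottom then if is_top then Lr else U else if is_top then D else Lb)"

lemma hat_last: "hat n \<sigma> (n+2) = 1"
  by (simp add: hat_def)

lemma hat_permutes:
  assumes "\<sigma> permutes {1..n+1}"
  shows "hat n \<sigma> permutes {1..n+2}"
proof (rule bij_imp_permutes)
  have "hat n \<sigma> ` {1..n+1} = Suc ` \<sigma> ` {1..n+1}"
    unfolding image_image by (rule image_cong) (auto simp: hat_def)
  also have "\<dots> = Suc ` {1..n+1}" by (simp only: permutes_image[OF assms])
  finally have "hat n \<sigma> ` {1..n+1} = {2..n+2}" by simp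
  moreover have "{1..n+2} = insert (n+2) {1..n+1}" by auto
  ultimately have "hat n \<sigma> ` {1..n+2} = insert 1 {2..n+2}" by (simp only: image_insert hat_last)
  also have "\<dots> = {1..n+2}" by auto
  finally have "hat n \<sigma> ` {1..n+2} = {1..n+2}" .
  then show "bij_betw (hat n \<sigma>) {1..n+2} {1..n+2}"
    by (simp add: bij_betw_def finite_surj_inj)
qed (auto simp: hat_def)

lemma hat_eq_ext0: "j \<in> {1..n+2} \<Longrightarrow> hat n \<sigma> j = ext0 (n+1) \<sigma> j + 1"
  by (auto simp: hat_def ext0_def)

lemma inv_hat:
  assumes "\<sigma> permutes {1..n+1}" "i \<in> {1..n+1}"
  shows "inv (hat n \<sigma>) (Suc i) = inv \<sigma> i"
proof -
  have "inv \<sigma> i \<in> {1..n+1}" using assms(2) permutes_in_image[OF permutes_inv[OF assms(1)]] by simp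
  then have "hat n \<sigma> (inv \<sigma> i) = Suc i"
    using permutes_inverses(1)[OF assms(1)] by (simp add: hat_def)
  then have "inv (hat n \<sigma>) (hat n \<sigma> (inv \<sigma> i)) = inv (hat n \<sigma>) (Suc i)" by simp
  then show ?thesis using permutes_inverses(2)[OF hat_permutes[OF assms(1)]] by simp
qed

lemma up_crossings_hat: "up_crossings (hat n \<sigma>) (Suc i) p (n+2) = up_crossings \<sigma> i p (n+1)"
proof (rule set_eqI)
  fix j
  show "j \<in> up_crossings (hat n \<sigma>) (Suc i) p (n+2) \<longleftrightarrow> j \<in> up_crossings \<sigma> i p (n+1)"
  proof (cases "p < j \<and> j \<le> n")
    case True
    then have "hat n \<sigma> j = \<sigma> j + 1" "hat n \<sigma> (j + 1) = \<sigma> (j + 1) + 1" by (simp_all add: hat_def)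
    with True show ?thesis by (simp add: up_crossings_def)
  next
    case False
    moreover have "hat n \<sigma> (n + 2) = 1" by (simp add: hat_def)
    ultimately show ?thesis by (auto simp: up_crossings_def less_Suc_eq)
  qed
qed

lemma Psi_permutes:
  assumes \<sigma>: "\<sigma> permutes {1..n+1}"
  shows "Psi n \<sigma> permutes {1..n+1}"
proof -
  interpret interval_permutation "n+2" "hat n \<sigma>" by standard (rule hat_permutes[OF \<sigma>])
  have "bij_betw \<tau> {1..n+2} {1..n+2}" using Phi_permutes by (rule permutes_imp_bij)
  moreover have "bij_betw \<tau> {1} {n+2}" using Phi_one[OF hat_last] by (simp add: bij_betw_def)
  ultimately have "bij_betw \<tau> ({1..n+2} - {1}) ({1..n+2} - {n+2})"
    by (rule bij_betw_DiffI) auto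
  moreover have "{1..n+2} - {1} = Suc ` {1..n+1}" "{1..n+2} - {n+2} = {1..n+1}" by auto
  ultimately have "bij_betw (\<tau> \<circ> Suc) {1..n+1} {1..n+1}"
    by (auto intro: bij_betw_trans)
  moreover have "bij_betw (Psi n \<sigma>) {1..n+1} {1..n+1} \<longleftrightarrow> bij_betw (\<tau> \<circ> Suc) {1..n+1} {1..n+1}"
    by (rule bij_betw_cong) (auto simp: Psi_def)
  ultimately have "bij_betw (Psi n \<sigma>) {1..n+1} {1..n+1}" by simp
  then show ?thesis by (rule bij_imp_permutes) (auto simp: Psi_def)
qed

lemma inv_Psi:
  assumes \<sigma>: "\<sigma> permutes {1..n+1}" and x: "x \<in> {1..n+1}"
  shows "inv (Psi n \<sigma>) x = inv (Phi (n+2) (hat n \<sigma>)) x - 1"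
proof -
  interpret interval_permutation "n+2" "hat n \<sigma>" by standard (rule hat_permutes[OF \<sigma>])
  define y where "y = inv \<tau> x"
  have y: "y \<in> {1..n+2}" "\<tau> y = x"
    using permutes_in_image[OF permutes_inv[OF Phi_permutes]] permutes_inverses(1)[OF Phi_permutes] x
    unfolding y_def by auto
  moreover have "y \<noteq> 1" using y x Phi_one[OF hat_last] by auto
  ultimately have "Psi n \<sigma> (y - 1) = x" by (auto simp: Psi_def)
  then show ?thesis
    using permutes_inverses(2)[OF Psi_permutes[OF \<sigma>], of "y - 1"] y_def by simp
qed

lemma fv_step_eq_step_of_descents:
  assumes \<sigma>: "\<sigma> permutes {1..n+1}" and i: "i \<in> {1..n}"
  shows "fv_step n \<sigma> i = step_of_descents (Suc i \<in> desc_bottoms (n+2) (hat n \<sigma>))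
                                           (Suc i \<in> desc_tops (n+2) (hat n \<sigma>))"
proof -
  interpret interval_permutation "n+2" "hat n \<sigma>" by standard (rule hat_permutes[OF \<sigma>])
  define p where "p = inv \<sigma> i"
  define a where "a = ext0 (Suc n) \<sigma> (p - 1)"
  define b where "b = ext0 (Suc n) \<sigma> (p + 1)"
  have p: "p \<in> {1..n+1}" "\<sigma> p = i"
    using i permutes_in_image[OF permutes_inv[OF \<sigma>]] permutes_inverses(1)[OF \<sigma>]
    unfolding p_def by auto
  have inv_hat_i: "inv (hat n \<sigma>) (Suc i) = p" using inv_hat[OF \<sigma>] i p_def by simp
  have "Suc i \<in> tops \<longleftrightarrow> b < i"
    using top_iff[of "Suc i"] i p hat_eq_ext0[of "Suc p" n \<sigma>] unfolding inv_hat_i b_def by auto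
  moreover have "Suc i \<in> bottoms \<longleftrightarrow> i < a"
  proof (cases "p = 1")
    case True
    then show ?thesis using bottom_iff[of "Suc i"] i unfolding inv_hat_i a_def by (simp add: ext0_def)
  next
    case False
    then have "p - 1 \<in> {1..n+2}" using p by auto
    then show ?thesis
      using bottom_iff[of "Suc i"] i False p hat_eq_ext0[of "p - 1" n \<sigma>] unfolding inv_hat_i a_def by auto
  qed
  moreover have "a \<noteq> i" "b \<noteq> i"
    using p i unfolding a_def b_def ext0_def by (auto simp: p(2)[symmetric] inj_eq[OF permutes_inj[OF \<sigma>]])
  moreover have "fv_step n \<sigma> i =
      (if i < a \<and> i < b then U else if a < i \<and> b < i then D else if a < i \<and> i < b then Lb else Lr)"
    unfolding fv_step_def Let_def p_def[symmetric] a_def[symmetric] b_def[symmetric] by simp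
  ultimately show ?thesis by (auto simp: step_of_descents_def)
qed

lemma yzl_step_Psi_eq_step_of_descents:
  assumes \<sigma>: "\<sigma> permutes {1..n+1}" and i: "i \<in> {1..n}"
  shows "yzl_step n (Psi n \<sigma>) i = step_of_descents (Suc i \<in> desc_bottoms (n+2) (hat n \<sigma>))
                                                   (Suc i \<in> desc_tops (n+2) (hat n \<sigma>))"
proof -
  interpret interval_permutation "n+2" "hat n \<sigma>" by standard (rule hat_permutes[OF \<sigma>])
  have "i < Psi n \<sigma> i \<longleftrightarrow> Suc i \<notin> tops"
    using top_iff_Phi_less[of "Suc i"] i by (auto simp: Psi_def)
  moreover have "i + 1 \<le> inv (Psi n \<sigma>) (i + 1) \<longleftrightarrow> Suc i \<in> bottoms"
    using bottom_iff_less_inv_Phi[of "Suc i"] inv_Psi[OF \<sigma>, of "Suc i"] i by auto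
  ultimately show ?thesis
    unfolding yzl_step_def step_of_descents_def by (auto simp: not_less)
qed

lemma Collect_atLeastAtMost_Suc: "{y\<in>{Suc a..Suc b}. P y} = Suc ` {j\<in>{a..b}. P (Suc j)}"
proof (rule set_eqI, rule iffI)
  fix y assume "y \<in> {y\<in>{Suc a..Suc b}. P y}"
  then show "y \<in> Suc ` {j\<in>{a..b}. P (Suc j)}" by (intro image_eqI[of _ _ "y - 1"]) auto
qed auto

lemma pat213_eq_nest_Psi:
  assumes \<sigma>: "\<sigma> permutes {1..n+1}" and i: "i \<in> {1..n}"
  shows "pat213 n \<sigma> i = nest n (Psi n \<sigma>) i"
proof -
  interpret interval_permutation "n+2" "hat n \<sigma>" by standard (rule hat_permutes[OF \<sigma>])
  let ?x = "Suc i"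
  let ?nesting = "\<lambda>y. (y < ?x \<and> ?x \<le> \<tau> ?x \<and> \<tau> ?x < \<tau> y) \<or> (\<tau> y < \<tau> ?x \<and> \<tau> ?x < ?x \<and> ?x < y)"
  have Psi_eq: "Psi n \<sigma> j = \<tau> (Suc j)" if "j \<in> {1..n+1}" for j
    using that by (simp add: Psi_def)
  have "pat213 n \<sigma> i = card (up_crossings \<sigma> i (inv \<sigma> i) (n+1))"
    by (simp add: pat213_def up_crossings_def)
  also have "\<dots> = card (up_crossings (hat n \<sigma>) ?x (inv \<sigma> i) (n+2))"
    by (rule arg_cong[where f = card], rule up_crossings_hat[symmetric])
  also have "\<dots> = card (up_crossings (hat n \<sigma>) ?x (inv (hat n \<sigma>) ?x) (n+2))"
    using inv_hat[OF \<sigma>, of i] i by simp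
  also have "\<dots> = card {y\<in>{2..n+2}. ?nesting y}"
    using i by (intro card_nestings_Phi[OF hat_last, symmetric]) simp
  also have "\<dots> = card {j\<in>{1..n+1}. ?nesting (Suc j)}"
  proof -
    have shift: "{2..n+2} = {Suc 1..Suc (n+1)}" by simp
    show ?thesis unfolding shift Collect_atLeastAtMost_Suc by (simp add: card_image)
  qed
  also have "{j\<in>{1..n+1}. ?nesting (Suc j)} = {j\<in>{1..n+1}.
      (j < i \<and> i < Psi n \<sigma> i \<and> Psi n \<sigma> i < Psi n \<sigma> j) \<or> (Psi n \<sigma> j < Psi n \<sigma> i \<and> Psi n \<sigma> i \<le> i \<and> i < j)}"
  proof (rule Collect_cong)
    fix j
    show "(j \<in> {1..n+1} \<and> ?nesting (Suc j)) \<longleftrightarrow> (j \<in> {1..n+1} \<and>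
        ((j < i \<and> i < Psi n \<sigma> i \<and> Psi n \<sigma> i < Psi n \<sigma> j) \<or> (Psi n \<sigma> j < Psi n \<sigma> i \<and> Psi n \<sigma> i \<le> i \<and> i < j)))"
      using Psi_eq[of j] Psi_eq[of i] i by auto
  qed
  finally show ?thesis unfolding nest_def .
qed

theorem theorem2p7:
  fixes n :: nat and \<sigma> :: "nat \<Rightarrow> nat"
  assumes "\<sigma> permutes {1..n+1}"
  shows "psiFV n \<sigma> = psiYZL n (Psi n \<sigma>)"
proof -
  have "map (fv_step n \<sigma>) [1..<n+1] = map (yzl_step n (Psi n \<sigma>)) [1..<n+1]"
  proof (rule map_cong[OF refl])
    fix i assume "i \<in> set [1..<n+1]"
    then have i: "i \<in> {1..n}" by auto
    show "fv_step n \<sigma> i = yzl_step n (Psi n \<sigma>) i"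
      unfolding fv_step_eq_step_of_descents[OF assms i] yzl_step_Psi_eq_step_of_descents[OF assms i] ..
  qed
  moreover have "map (pat213 n \<sigma>) [1..<n+1] = map (nest n (Psi n \<sigma>)) [1..<n+1]"
  proof (rule map_cong[OF refl])
    fix i assume "i \<in> set [1..<n+1]"
    then have i: "i \<in> {1..n}" by auto
    show "pat213 n \<sigma> i = nest n (Psi n \<sigma>) i" by (rule pat213_eq_nest_Psi[OF assms i])
  qed
  ultimately show ?thesis unfolding psiFV_def psiYZL_def by simp
qed

end
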